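(* For every $n\ge 0$ there is a UFA with $n$ states such that both its forward determinization and its backward determinization have at least $\frac12\sqrt{n+1}\cdot 2^{n/2}$ states.
   Context: A UFA is an NFA $(Q,\Sigma,\delta,I,F)$ (finite states $Q$, finite alphabet $\Sigma$, transitions $\delta\subseteq Q\times\Sigma\times Q$, initial states $I$, accepting states $F$) in which every word has at most one accepting run (run from a state of $I$ to a state of $F$). For $S\subseteq Q$, $w\in\Sigma^*$: $\delta(S,w)=\{r\mid\exists q\in S.\ q\xrightarrow{w}r\}$, $\delta^{-1}(w,S)=\{r\mid \exists q\in S.\ r\xrightarrow{w} q\}$. The forward determinization has state set $\{\delta(I,w)\mid w\in\Sigma^*\}$; the backward determinization has state set $\{\delta^{-1}(w,F)\mid w\in\Sigma^*\}$. *)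

theory Defs
  imports Complex_Main
begin

definition runs :: "('q \<times> 'a \<times> 'q) set \<Rightarrow> 'a list \<Rightarrow> 'q list set" where
  "runs d w = {qs. length qs = Suc (length w) \<and>
                   (\<forall>i < length w. (qs ! i, w ! i, qs ! Suc i) \<in> d)}"

definition is_nfa :: "'q set \<Rightarrow> 'a set \<Rightarrow> ('q \<times> 'a \<times> 'q) set \<Rightarrow> 'q set \<Rightarrow> 'q set \<Rightarrow> bool" where
  "is_nfa Q Sig d I F \<longleftrightarrow> finite Q \<and> finite Sig \<and> d \<subseteq> Q \<times> Sig \<times> Q \<and> I \<subseteq> Q \<and> F \<subseteq> Q"

definition accepting_runs :: "('q \<times> 'a \<times> 'q) set \<Rightarrow> 'q set \<Rightarrow> 'q set \<Rightarrow> 'a list \<Rightarrow> 'q list set" where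
  "accepting_runs d I F w = {qs \<in> runs d w. hd qs \<in> I \<and> last qs \<in> F}"

definition is_ufa :: "'q set \<Rightarrow> 'a set \<Rightarrow> ('q \<times> 'a \<times> 'q) set \<Rightarrow> 'q set \<Rightarrow> 'q set \<Rightarrow> bool" where
  "is_ufa Q Sig d I F \<longleftrightarrow> is_nfa Q Sig d I F \<and>
     (\<forall>w \<in> lists Sig. \<forall>r1 \<in> accepting_runs d I F w. \<forall>r2 \<in> accepting_runs d I F w. r1 = r2)"

definition delta_fwd :: "('q \<times> 'a \<times> 'q) set \<Rightarrow> 'q set \<Rightarrow> 'a list \<Rightarrow> 'q set" where
  "delta_fwd d S w = {r. \<exists>qs \<in> runs d w. hd qs \<in> S \<and> last qs = r}"

definition delta_bwd :: "('q \<times> 'a \<times> 'q) set \<Rightarrow> 'a list \<Rightarrow> 'q set \<Rightarrow> 'q set" where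
  "delta_bwd d w S = {r. \<exists>qs \<in> runs d w. hd qs = r \<and> last qs \<in> S}"

definition fwd_det_states :: "'a set \<Rightarrow> ('q \<times> 'a \<times> 'q) set \<Rightarrow> 'q set \<Rightarrow> 'q set set" where
  "fwd_det_states Sig d I = {delta_fwd d I w | w. w \<in> lists Sig}"

definition bwd_det_states :: "'a set \<Rightarrow> ('q \<times> 'a \<times> 'q) set \<Rightarrow> 'q set \<Rightarrow> 'q set set" where
  "bwd_det_states Sig d F = {delta_bwd d w F | w. w \<in> lists Sig}"

end

theory Submission
  imports Defs
begin

text \<open>Take states \<open>0..<n\<close>, initial block \<open>{0..<a}\<close> and final block \<open>{a..<n}\<close>.
  A letter \<open>j < n\<close> deletes state \<open>j\<close> and loops on every other state; a letter \<open>n + x\<close>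
  with \<open>x < a\<close> moves \<open>x\<close> to the final state \<open>a\<close> and loops on the final block.
  The automaton is deterministic, and an accepting run must start in the state \<open>x\<close> named by
  the first letter \<open>\<ge> n\<close> of the word, so it is unambiguous.
  Deleting letters reach every subset of the initial block, giving \<open>2\<^sup>a\<close> forward states;
  backwards they reach every subset of the final block, with or without one extra initial
  state, giving \<open>(a + 1) 2\<^sup>n\<^sup>-\<^sup>a\<close> backward states.
  Choosing \<open>a\<close> minimal with \<open>(n + 1) 2\<^sup>n \<le> 4\<^sup>a\<^sup>+\<^sup>1\<close> makes both counts at least
  \<open>\<surd>(n + 1) 2\<^sup>n\<^sup>/\<^sup>2 / 2\<close>.\<close>

lemma runs_Nil: "runs d [] = {[q] | q. True}"
  unfolding runs_def by (auto simp: length_Suc_conv)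

lemma runs_nonempty: "qs \<in> runs d w \<Longrightarrow> qs \<noteq> []"
  unfolding runs_def by auto

lemma Cons_in_runs_Cons_iff:
  "q # qs \<in> runs d (c # w) \<longleftrightarrow> qs \<in> runs d w \<and> (q, c, hd qs) \<in> d"
  by (cases qs) (auto simp: runs_def All_less_Suc2)

lemma runs_ConsE:
  assumes "qs \<in> runs d (c # w)"
  obtains q qs' where "qs = q # qs'" "qs' \<in> runs d w" "(q, c, hd qs') \<in> d"
  using assms runs_nonempty by (cases qs) (auto simp: Cons_in_runs_Cons_iff)

lemma delta_fwd_Nil: "delta_fwd d S [] = S"
  unfolding delta_fwd_def runs_Nil by auto

lemma delta_bwd_Nil: "delta_bwd d [] S = S"
  unfolding delta_bwd_def runs_Nil by auto

lemma delta_fwd_Cons: "delta_fwd d S (c # w) = delta_fwd d {r. \<exists>q\<in>S. (q, c, r) \<in> d} w"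
proof (intro set_eqI iffI)
  fix r assume "r \<in> delta_fwd d S (c # w)"
  then obtain qs where qs: "qs \<in> runs d (c # w)" "hd qs \<in> S" "last qs = r"
    unfolding delta_fwd_def by blast
  from qs(1) obtain q qs' where "qs = q # qs'" "qs' \<in> runs d w" "(q, c, hd qs') \<in> d"
    by (rule runs_ConsE)
  moreover from this qs have "q \<in> S" "last qs' = r" by (simp_all add: runs_nonempty)
  ultimately show "r \<in> delta_fwd d {r. \<exists>q\<in>S. (q, c, r) \<in> d} w"
    unfolding delta_fwd_def by blast
next
  fix r assume "r \<in> delta_fwd d {r. \<exists>q\<in>S. (q, c, r) \<in> d} w"
  then obtain q qs where "qs \<in> runs d w" "q \<in> S" "(q, c, hd qs) \<in> d" "last qs = r"
    unfolding delta_fwd_def by blast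
  then have "q # qs \<in> runs d (c # w)" "hd (q # qs) \<in> S" "last (q # qs) = r"
    by (simp_all add: Cons_in_runs_Cons_iff runs_nonempty)
  then show "r \<in> delta_fwd d S (c # w)"
    unfolding delta_fwd_def by blast
qed

lemma delta_bwd_Cons: "delta_bwd d (c # w) S = {r. \<exists>q\<in>delta_bwd d w S. (r, c, q) \<in> d}"
proof (intro set_eqI iffI)
  fix r assume "r \<in> delta_bwd d (c # w) S"
  then obtain qs where qs: "qs \<in> runs d (c # w)" "hd qs = r" "last qs \<in> S"
    unfolding delta_bwd_def by blast
  from qs(1) obtain q qs' where "qs = q # qs'" "qs' \<in> runs d w" "(q, c, hd qs') \<in> d"
    by (rule runs_ConsE)
  moreover from this qs have "q = r" "last qs' \<in> S" by (simp_all add: runs_nonempty)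
  ultimately show "r \<in> {r. \<exists>q\<in>delta_bwd d w S. (r, c, q) \<in> d}"
    unfolding delta_bwd_def by blast
next
  fix r assume "r \<in> {r. \<exists>q\<in>delta_bwd d w S. (r, c, q) \<in> d}"
  then obtain qs where "qs \<in> runs d w" "(r, c, hd qs) \<in> d" "last qs \<in> S"
    unfolding delta_bwd_def by blast
  then have "r # qs \<in> runs d (c # w)" "hd (r # qs) = r" "last (r # qs) \<in> S"
    by (simp_all add: Cons_in_runs_Cons_iff runs_nonempty)
  then show "r \<in> delta_bwd d (c # w) S"
    unfolding delta_bwd_def by blast
qed

lemma delta_bwd_append: "delta_bwd d (u @ v) S = delta_bwd d u (delta_bwd d v S)"
  by (induction u) (auto simp: delta_bwd_Cons delta_bwd_Nil)

lemma delta_fwd_subset: "d \<subseteq> Q \<times> UNIV \<times> Q \<Longrightarrow> S \<subseteq> Q \<Longrightarrow> delta_fwd d S w \<subseteq> Q"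
proof (induction w arbitrary: S)
  case (Cons c w)
  then have "{r. \<exists>q\<in>S. (q, c, r) \<in> d} \<subseteq> Q" by blast
  with Cons.IH Cons.prems show ?case by (simp add: delta_fwd_Cons)
qed (simp add: delta_fwd_Nil)

lemma delta_bwd_subset: "d \<subseteq> Q \<times> UNIV \<times> Q \<Longrightarrow> S \<subseteq> Q \<Longrightarrow> delta_bwd d w S \<subseteq> Q"
  by (induction w) (auto simp: delta_bwd_Cons delta_bwd_Nil)

lemma fwd_det_states_subset_Pow:
  "d \<subseteq> Q \<times> UNIV \<times> Q \<Longrightarrow> I \<subseteq> Q \<Longrightarrow> fwd_det_states Sig d I \<subseteq> Pow Q"
  unfolding fwd_det_states_def using delta_fwd_subset by blast

lemma bwd_det_states_subset_Pow:
  "d \<subseteq> Q \<times> UNIV \<times> Q \<Longrightarrow> F \<subseteq> Q \<Longrightarrow> bwd_det_states Sig d F \<subseteq> Pow Q"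
  unfolding bwd_det_states_def using delta_bwd_subset by blast

lemma runs_eq_if_deterministic:
  assumes det: "\<And>p c q q'. (p, c, q) \<in> d \<Longrightarrow> (p, c, q') \<in> d \<Longrightarrow> q = q'"
  shows "qs \<in> runs d w \<Longrightarrow> qs' \<in> runs d w \<Longrightarrow> hd qs = hd qs' \<Longrightarrow> qs = qs'"
proof (induction w arbitrary: qs qs')
  case (Cons c w)
  obtain q r where "qs = q # r" "r \<in> runs d w" "(q, c, hd r) \<in> d"
    using Cons.prems(1) by (rule runs_ConsE)
  moreover obtain q' r' where "qs' = q' # r'" "r' \<in> runs d w" "(q', c, hd r') \<in> d"
    using Cons.prems(2) by (rule runs_ConsE)
  ultimately show ?case using Cons det by auto
qed (auto simp: runs_Nil)

definition witness_trans :: "nat \<Rightarrow> nat \<Rightarrow> (nat \<times> nat \<times> nat) set" where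
  "witness_trans n a =
     {(q, j, q) | q j. q < n \<and> j < n \<and> q \<noteq> j} \<union> {(x, n + x, a) | x. x < a}
     \<union> {(y, n + x, y) | x y. x < a \<and> a \<le> y \<and> y < n}"

lemma witness_trans_deterministic:
  "(p, c, q) \<in> witness_trans n a \<Longrightarrow> (p, c, q') \<in> witness_trans n a \<Longrightarrow> q = q'"
  unfolding witness_trans_def by auto

lemma witness_trans_subset:
  "a < n \<Longrightarrow> witness_trans n a \<subseteq> {0..<n} \<times> {0..<n + a} \<times> {0..<n}"
  unfolding witness_trans_def by auto

lemma witness_post_delete:
  "j < n \<Longrightarrow> S \<subseteq> {0..<n} \<Longrightarrow> {r. \<exists>q\<in>S. (q, j, r) \<in> witness_trans n a} = S - {j}"
  unfolding witness_trans_def by auto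

lemma witness_pre_delete:
  "j < n \<Longrightarrow> S \<subseteq> {0..<n} \<Longrightarrow> {r. \<exists>q\<in>S. (r, j, q) \<in> witness_trans n a} = S - {j}"
  unfolding witness_trans_def by auto

lemma witness_pre_entry:
  "x < a \<Longrightarrow> a < n \<Longrightarrow>
     {r. \<exists>q\<in>{a..<n}. (r, n + x, q) \<in> witness_trans n a} = insert x {a..<n}"
  unfolding witness_trans_def by auto

lemma delta_fwd_witness_deletes:
  "set w \<subseteq> {0..<n} \<Longrightarrow> S \<subseteq> {0..<n} \<Longrightarrow> delta_fwd (witness_trans n a) S w = S - set w"
proof (induction w arbitrary: S)
  case (Cons c w)
  then have "delta_fwd (witness_trans n a) S (c # w) = delta_fwd (witness_trans n a) (S - {c}) w"
    by (simp add: delta_fwd_Cons witness_post_delete)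
  also have "\<dots> = S - {c} - set w"
    using Cons.prems by (intro Cons.IH) auto
  finally show ?case by auto
qed (simp add: delta_fwd_Nil)

lemma delta_bwd_witness_deletes:
  "set w \<subseteq> {0..<n} \<Longrightarrow> S \<subseteq> {0..<n} \<Longrightarrow> delta_bwd (witness_trans n a) w S = S - set w"
proof (induction w)
  case (Cons c w)
  then have "delta_bwd (witness_trans n a) (c # w) S = S - set w - {c}"
    by (simp add: delta_bwd_Cons) (intro witness_pre_delete; auto)
  then show ?case by auto
qed (simp add: delta_bwd_Nil)

lemma witness_first_entry_letter:
  "qs \<in> runs (witness_trans n a) w \<Longrightarrow> hd qs < a \<Longrightarrow> a \<le> last qs \<Longrightarrow>
     hd (dropWhile (\<lambda>c. c < n) w) = n + hd qs"
proof (induction w arbitrary: qs)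
  case (Cons c w)
  obtain q qs' where qs: "qs = q # qs'" "qs' \<in> runs (witness_trans n a) w"
    and step: "(q, c, hd qs') \<in> witness_trans n a"
    using Cons.prems(1) by (rule runs_ConsE)
  show ?case
  proof (cases "c < n")
    case True
    with step have "hd qs' = q" unfolding witness_trans_def by auto
    with Cons.IH[OF qs(2)] Cons.prems qs True show ?thesis by (auto dest: runs_nonempty)
  next
    case False
    with step Cons.prems(2) qs(1) show ?thesis unfolding witness_trans_def by auto
  qed
qed (auto simp: runs_Nil)

lemma is_ufa_witness:
  assumes "a < n"
  shows "is_ufa {0..<n} {0..<n + a} (witness_trans n a) {0..<a} {a..<n}"
proof -
  have "is_nfa {0..<n} {0..<n + a} (witness_trans n a) {0..<a} {a..<n}"
    unfolding is_nfa_def using witness_trans_subset[OF assms] assms by auto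
  moreover have "qs = qs'"
    if "qs \<in> accepting_runs (witness_trans n a) {0..<a} {a..<n} w"
      and "qs' \<in> accepting_runs (witness_trans n a) {0..<a} {a..<n} w" for w qs qs'
  proof -
    have runs: "qs \<in> runs (witness_trans n a) w" "qs' \<in> runs (witness_trans n a) w"
      using that unfolding accepting_runs_def by auto
    have "n + hd qs = n + hd qs'"
      using that witness_first_entry_letter[OF runs(1)] witness_first_entry_letter[OF runs(2)]
      unfolding accepting_runs_def by auto
    then show "qs = qs'"
      using runs_eq_if_deterministic[OF witness_trans_deterministic runs] by simp
  qed
  ultimately show ?thesis unfolding is_ufa_def by blast
qed

lemma card_fwd_det_states_witness:
  assumes "a < n"
  shows "2 ^ a \<le> card (fwd_det_states {0..<n + a} (witness_trans n a) {0..<a})"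
proof -
  have "Pow {0..<a} \<subseteq> fwd_det_states {0..<n + a} (witness_trans n a) {0..<a}"
  proof
    fix S assume "S \<in> Pow {0..<a}"
    define w where "w = sorted_list_of_set ({0..<a} - S)"
    have "delta_fwd (witness_trans n a) {0..<a} w = {0..<a} - set w"
      using assms by (intro delta_fwd_witness_deletes) (auto simp: w_def)
    with \<open>S \<in> Pow {0..<a}\<close> have "delta_fwd (witness_trans n a) {0..<a} w = S"
      by (auto simp: w_def)
    moreover have "w \<in> lists {0..<n + a}" by (auto simp: w_def)
    ultimately show "S \<in> fwd_det_states {0..<n + a} (witness_trans n a) {0..<a}"
      unfolding fwd_det_states_def by blast
  qed
  moreover have "fwd_det_states {0..<n + a} (witness_trans n a) {0..<a} \<subseteq> Pow {0..<n}"
    using witness_trans_subset[OF assms] assms by (intro fwd_det_states_subset_Pow) auto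
  then have "finite (fwd_det_states {0..<n + a} (witness_trans n a) {0..<a})"
    by (rule finite_subset) simp
  ultimately have "card (Pow {0..<a}) \<le> card (fwd_det_states {0..<n + a} (witness_trans n a) {0..<a})"
    by (intro card_mono)
  then show ?thesis by (simp add: card_Pow)
qed

lemma bwd_det_states_witness_reach:
  assumes "a < n" and "T \<subseteq> {a..<n}"
  shows "T \<in> bwd_det_states {0..<n + a} (witness_trans n a) {a..<n}"
    and "x < a \<Longrightarrow> insert x T \<in> bwd_det_states {0..<n + a} (witness_trans n a) {a..<n}"
proof -
  define w where "w = sorted_list_of_set ({a..<n} - T)"
  have w: "set w = {a..<n} - T" "w \<in> lists {0..<n + a}" unfolding w_def by auto
  have "delta_bwd (witness_trans n a) w {a..<n} = {a..<n} - set w"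
    using w assms by (intro delta_bwd_witness_deletes) auto
  with w assms have "delta_bwd (witness_trans n a) w {a..<n} = T" by auto
  with w show "T \<in> bwd_det_states {0..<n + a} (witness_trans n a) {a..<n}"
    unfolding bwd_det_states_def by blast
  show "insert x T \<in> bwd_det_states {0..<n + a} (witness_trans n a) {a..<n}" if "x < a"
  proof -
    have "delta_bwd (witness_trans n a) (w @ [n + x]) {a..<n} =
        delta_bwd (witness_trans n a) w (insert x {a..<n})"
      using witness_pre_entry[OF that assms(1)]
      by (simp add: delta_bwd_append delta_bwd_Cons delta_bwd_Nil)
    also have "\<dots> = insert x {a..<n} - set w"
      using w that assms by (intro delta_bwd_witness_deletes) auto
    also have "\<dots> = insert x T"
      using w that assms by auto
    finally show ?thesis
      unfolding bwd_det_states_def using w that assms by fastforce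
  qed
qed

lemma card_bwd_det_states_witness:
  assumes "a < n"
  shows "(a + 1) * 2 ^ (n - a) \<le> card (bwd_det_states {0..<n + a} (witness_trans n a) {a..<n})"
proof -
  \<comment> \<open>\<open>x = a\<close> encodes adding no initial state\<close>
  define g where "g = (\<lambda>(x, T). if x < a then insert x T else T :: nat set)"
  let ?D = "{0..a} \<times> Pow {a..<n}"
  have "g ` ?D \<subseteq> bwd_det_states {0..<n + a} (witness_trans n a) {a..<n}"
    using bwd_det_states_witness_reach[OF assms] by (auto simp: g_def)
  moreover have "inj_on g ?D"
  proof (rule inj_onI)
    fix p p' assume "p \<in> ?D" "p' \<in> ?D" and eq': "g p = g p'"
    obtain x T x' T' where p: "p = (x, T)" "p' = (x', T')" by fastforce
    with \<open>p \<in> ?D\<close> \<open>p' \<in> ?D\<close> eq' have D: "(x, T) \<in> ?D" "(x', T') \<in> ?D"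
      and eq: "g (x, T) = g (x', T')" by simp_all
    have "g (x, T) \<inter> {a..<n} = T" "g (x', T') \<inter> {a..<n} = T'"
      using D by (auto simp: g_def)
    with eq have "T = T'" by simp
    have "g (x, T) \<inter> {0..<a} = (if x < a then {x} else {})"
      "g (x', T') \<inter> {0..<a} = (if x' < a then {x'} else {})"
      using D by (auto simp: g_def)
    with eq have "(if x < a then {x} else {}) = (if x' < a then {x'} else {})" by simp
    with D have "x = x'" by (cases "x < a"; cases "x' < a") auto
    with \<open>T = T'\<close> p show "p = p'" by simp
  qed
  then have "card (g ` ?D) = (a + 1) * 2 ^ (n - a)"
    by (simp add: card_image card_cartesian_product card_Pow)
  moreover have "bwd_det_states {0..<n + a} (witness_trans n a) {a..<n} \<subseteq> Pow {0..<n}"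
    using witness_trans_subset[OF assms] by (intro bwd_det_states_subset_Pow) auto
  then have "finite (bwd_det_states {0..<n + a} (witness_trans n a) {a..<n})"
    by (rule finite_subset) simp
  ultimately show ?thesis using card_mono by metis
qed

lemma exists_balanced_split:
  fixes n :: nat
  assumes "1 \<le> n"
  obtains a where "a < n" "(n + 1) * 2 ^ n \<le> 4 * (2 ^ a)\<^sup>2"
    "(n + 1) * 2 ^ n \<le> 4 * ((a + 1) * 2 ^ (n - a))\<^sup>2"
proof -
  define P where "P a \<longleftrightarrow> (n + 1) * 2 ^ n \<le> 4 * (2 ^ a)\<^sup>2" for a :: nat
  define a where "a = (LEAST a. P a)"
  have four_square_pow_pred: "4 * (2 ^ (k - 1))\<^sup>2 = (2 ^ k :: nat)\<^sup>2" if "1 \<le> k" for k :: nat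
    using that by (cases k) (auto simp: power2_eq_square)
  have "n + 1 \<le> 2 ^ n" using less_exp[of n] by (simp add: Suc_le_eq)
  then have "(n + 1) * 2 ^ n \<le> 2 ^ n * 2 ^ n" by (rule mult_le_mono1)
  then have "P (n - 1)" unfolding P_def four_square_pow_pred[OF assms] by (simp only: power2_eq_square)
  then have Pa: "P a" and "a < n"
    unfolding a_def using assms by (auto intro: LeastI Least_le[THEN le_less_trans])
  moreover have "(n + 1) * 2 ^ n \<le> 4 * ((a + 1) * 2 ^ (n - a))\<^sup>2"
  proof (cases "a = 0")
    case True
    with Pa show ?thesis unfolding P_def by (simp add: power2_eq_square order_trans)
  next
    case False
    define A B :: nat where "A = 2 ^ a" and "B = 2 ^ (n - a)"
    have AB: "2 ^ n = A * B" "A > 0" "B > 0"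
      unfolding A_def B_def using \<open>a < n\<close> by (auto simp flip: power_add)
    from Pa have "((n + 1) * B) * A \<le> (4 * A) * A"
      unfolding P_def AB(1) A_def[symmetric] power2_eq_square by (simp only: ac_simps)
    then have "(n + 1) * B \<le> 4 * A" using AB by simp
    moreover have "2 * B \<le> (n + 1) * B" using assms by (intro mult_le_mono1) simp
    ultimately have "2 * B \<le> 4 * A" by linarith
    then have "(2::nat) ^ (n - a) \<le> 2 ^ (a + 1)" by (simp add: A_def B_def)
    then have "n - a \<le> a + 1" by (rule power_le_imp_le_exp[rotated]) simp
    then have small: "n + 1 \<le> 2 * (a + 1)" by simp
    have "\<not> P (a - 1)" using not_less_Least[of "a - 1" P] False unfolding a_def by simp
    moreover have "4 * (2 ^ (a - 1))\<^sup>2 = A * A"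
      using four_square_pow_pred[of a] False by (simp add: A_def power2_eq_square)
    ultimately have "A * A < (n + 1) * B * A"
      unfolding P_def AB(1) by (simp only: not_le ac_simps)
    then have "A < (n + 1) * B" using AB by simp
    have "(n + 1) * 2 ^ n = (n + 1) * B * A" by (simp add: AB(1) ac_simps)
    also have "\<dots> \<le> (n + 1) * B * ((n + 1) * B)" using \<open>A < (n + 1) * B\<close> by simp
    also have "\<dots> \<le> (2 * (a + 1)) * B * ((2 * (a + 1)) * B)" using small by (intro mult_le_mono) auto
    also have "\<dots> = 4 * ((a + 1) * 2 ^ (n - a))\<^sup>2" by (simp add: B_def power2_eq_square algebra_simps)
    finally show ?thesis .
  qed
  ultimately show ?thesis using that unfolding P_def by blast
qed

lemma sqrt_bound_le_if_square_le:
  fixes n m k :: nat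
  assumes "(n + 1) * 2 ^ n \<le> 4 * m\<^sup>2" and "m \<le> k"
  shows "1/2 * sqrt (real n + 1) * 2 powr (real n / 2) \<le> real k"
proof -
  have "2 powr (real n / 2) = sqrt (2 ^ n)"
    by (simp add: powr_half_sqrt[symmetric] powr_realpow[symmetric] powr_powr)
  then have "sqrt (real n + 1) * 2 powr (real n / 2) = sqrt ((real n + 1) * 2 ^ n)"
    by (simp add: real_sqrt_mult)
  also have "\<dots> \<le> sqrt (4 * (real k)\<^sup>2)"
  proof -
    have "(n + 1) * 2 ^ n \<le> 4 * k\<^sup>2"
      using assms by (meson le_trans mult_le_mono2 power_mono zero_le)
    then have "real ((n + 1) * 2 ^ n) \<le> real (4 * k\<^sup>2)" by (simp only: of_nat_le_iff)
    then show ?thesis by (simp add: algebra_simps)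
  qed
  also have "\<dots> = 2 * real k" by (simp add: real_sqrt_mult)
  finally show ?thesis by simp
qed

theorem proposition3:
  fixes n :: nat
  shows "\<exists>(Q :: nat set) (Sig :: nat set) d I F.
           is_ufa Q Sig d I F \<and> card Q = n \<and>
           real (card (fwd_det_states Sig d I)) \<ge> 1/2 * sqrt (real n + 1) * 2 powr (real n / 2) \<and>
           real (card (bwd_det_states Sig d F)) \<ge> 1/2 * sqrt (real n + 1) * 2 powr (real n / 2)"
proof (cases "n = 0")
  case True
  define no_trans :: "(nat \<times> nat \<times> nat) set" where "no_trans = {}"
  have "is_ufa {} {} no_trans {} {}"
    unfolding is_ufa_def is_nfa_def accepting_runs_def no_trans_def by auto
  moreover have "fwd_det_states {} no_trans {} = {{}}" "bwd_det_states {} no_trans {} = {{}}"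
    by (auto simp: fwd_det_states_def bwd_det_states_def delta_fwd_Nil delta_bwd_Nil)
  moreover have "1/2 * sqrt (real n + 1) * 2 powr (real n / 2) \<le> real (1 :: nat)"
    using True by (intro sqrt_bound_le_if_square_le[of n 1]) auto
  ultimately show ?thesis using True by (intro exI[of _ no_trans] exI[of _ "{}"]) simp
next
  case False
  then obtain a where "a < n" and fwd: "(n + 1) * 2 ^ n \<le> 4 * (2 ^ a)\<^sup>2"
    and bwd: "(n + 1) * 2 ^ n \<le> 4 * ((a + 1) * 2 ^ (n - a))\<^sup>2"
    using exists_balanced_split[of n] by auto
  have "is_ufa {0..<n} {0..<n + a} (witness_trans n a) {0..<a} {a..<n}"
    using \<open>a < n\<close> by (rule is_ufa_witness)
  moreover have "1/2 * sqrt (real n + 1) * 2 powr (real n / 2)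
      \<le> real (card (fwd_det_states {0..<n + a} (witness_trans n a) {0..<a}))"
    using fwd card_fwd_det_states_witness[OF \<open>a < n\<close>] by (rule sqrt_bound_le_if_square_le)
  moreover have "1/2 * sqrt (real n + 1) * 2 powr (real n / 2)
      \<le> real (card (bwd_det_states {0..<n + a} (witness_trans n a) {a..<n}))"
    using bwd card_bwd_det_states_witness[OF \<open>a < n\<close>] by (rule sqrt_bound_le_if_square_le)
  ultimately show ?thesis by fastforce
qed

end
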